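(* Let $\mu<0$, $k=e^{-\mu}$, $g_c=k/(1+k)^2$, $x=X(g_c)$ with $X(g)=\frac{1-\sqrt{1-4g}}2$ (so $0<x<1/2$). Let $p(n)=x^n(1-x)$, $n\ge0$, a subcritical offspring distribution with mean $m=x/(1-x)<1$, and let $\hat\lambda$ be the associated Kesten (size-biased) tree, i.e. the Borel probability measure on $\mathcal T$ such that for every $T_0\in\mathcal T_{\rm fin}$ of height $r$, $$\hat\lambda\big(\mathcal B_{1/r}(T_0)\big)=\sum_{i\in D_r(T_0)}\ \prod_{v\in\bigcup_{s=1}^{r-1}D_s(T_0)\setminus V(\omega(i))}p(\sigma(v)-1)\prod_{v\in V(\omega(i))\setminus\{i\}}p^s(\sigma(v)-2),$$ where $\omega(i)$ is the path from the height-1 vertex to $i$, $\sigma(v)$ the degree of $v$, and $p^s(n)=p(n+1)/m$. Then $\nu^{(\mu)}=\hat\lambda$.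
   Context: Rooted planar trees (root of degree 1); $D_r(T)$ = vertices at height $r$; the degree $\sigma(v)$ of a non-root vertex $v$ equals its number of offspring plus one. $\mathcal B_{1/r}(T_0)=\{T: B_r(T)=T_0\}$ where $B_r(T)$ is the subtree spanned by vertices of height $\le r$; balls determine Borel probability measures on $\mathcal T$. $\nu^{(\mu)}$ is the weak limit as $N\to\infty$ of $\nu_N^{(\mu)}(T)=e^{-\mu h(T)}/Z_N^{(\mu)}$ on trees of size $N$ (number of edges), $Z_N^{(\mu)}=\sum_{|T|=N}e^{-\mu h(T)}$; it is characterized by $\nu^{(\mu)}(\mathcal B_{1/r}(T_0))=K k^{r-1}g_c^{|T_0|-K}X(g_c)^{K-1}$, $K=|D_r(T_0)|$. *)

theory Defs
  imports "HOL-Probability.Probability"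
begin

text \<open>Rooted planar trees in Ulam-Harris encoding: vertices are words over nat,
  the root is the empty word, the children of v are the words v @ [i],
  ordered by i. The root has degree 1, i.e. its only child is [0].\<close>

definition is_tree :: "nat list set \<Rightarrow> bool" where
  "is_tree T \<longleftrightarrow>
     [] \<in> T \<and> [0] \<in> T \<and> [1] \<notin> T
     \<and> (\<forall>v\<in>T. \<forall>n. take n v \<in> T)
     \<and> (\<forall>v i j. v @ [i] \<in> T \<longrightarrow> j < i \<longrightarrow> v @ [j] \<in> T)
     \<and> (\<forall>v\<in>T. finite {i. v @ [i] \<in> T})"

definition trees :: "nat list set set" where
  "trees = {T. is_tree T}"

definition fin_trees :: "nat list set set" where
  "fin_trees = {T. is_tree T \<and> finite T}"

definition offspring :: "nat list set \<Rightarrow> nat list \<Rightarrow> nat" where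
  "offspring T v = card {i. v @ [i] \<in> T}"

definition deg :: "nat list set \<Rightarrow> nat list \<Rightarrow> nat" where
  "deg T v = offspring T v + 1"

definition height :: "nat list set \<Rightarrow> nat" where
  "height T = Max (length ` T)"

definition tsize :: "nat list set \<Rightarrow> nat" where
  "tsize T = card T - 1"

definition D :: "nat \<Rightarrow> nat list set \<Rightarrow> nat list set" where
  "D r T = {v \<in> T. length v = r}"

definition Bt :: "nat \<Rightarrow> nat list set \<Rightarrow> nat list set" where
  "Bt r T = {v \<in> T. length v \<le> r}"

definition ball_tree :: "nat \<Rightarrow> nat list set \<Rightarrow> nat list set set" where
  "ball_tree r T0 = {T \<in> trees. Bt r T = T0}"

text \<open>Borel sigma-algebra on the space of trees: generated by the balls
  (the balls form a countable base of the ball-metric topology)\<close>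
definition tree_space :: "nat list set measure" where
  "tree_space = sigma trees {ball_tree r T0 | r T0. T0 \<in> fin_trees}"

definition path_V :: "nat list \<Rightarrow> nat list set" where
  "path_V i = {take n i | n. 1 \<le> n \<and> n \<le> length i}"

definition Xfun :: "real \<Rightarrow> real" where
  "Xfun g = (1 - sqrt (1 - 4 * g)) / 2"

definition kpar :: "real \<Rightarrow> real" where
  "kpar \<mu> = exp (- \<mu>)"

definition gcrit :: "real \<Rightarrow> real" where
  "gcrit \<mu> = kpar \<mu> / (1 + kpar \<mu>)\<^sup>2"

definition xpar :: "real \<Rightarrow> real" where
  "xpar \<mu> = Xfun (gcrit \<mu>)"

definition pdist :: "real \<Rightarrow> nat \<Rightarrow> real" where
  "pdist \<mu> n = xpar \<mu> ^ n * (1 - xpar \<mu>)"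

definition mpar :: "real \<Rightarrow> real" where
  "mpar \<mu> = xpar \<mu> / (1 - xpar \<mu>)"

definition psdist :: "real \<Rightarrow> nat \<Rightarrow> real" where
  "psdist \<mu> n = pdist \<mu> (n + 1) / mpar \<mu>"

definition nu_ball :: "real \<Rightarrow> nat \<Rightarrow> nat list set \<Rightarrow> real" where
  "nu_ball \<mu> r T0 = (let K = card (D r T0) in
     real K * kpar \<mu> ^ (r - 1) * gcrit \<mu> ^ (tsize T0 - K) * xpar \<mu> ^ (K - 1))"

definition kesten_ball :: "real \<Rightarrow> nat \<Rightarrow> nat list set \<Rightarrow> real" where
  "kesten_ball \<mu> r T0 =
     (\<Sum>i\<in>D r T0.
        (\<Prod>v\<in>(\<Union>s\<in>{1..r-1}. D s T0) - path_V i. pdist \<mu> (deg T0 v - 1))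
      * (\<Prod>v\<in>path_V i - {i}. psdist \<mu> (deg T0 v - 2)))"

end

theory Submission
  imports Defs
begin

text \<open>Both measures are probability measures on the \<sigma>-algebra generated by the balls, and the
  balls \<open>ball_tree (height T0) T0\<close> whose radius is the height of their centre, together with
  \<open>{}\<close>, already form an \<inter>-stable generator of it: a ball of larger radius is a singleton, obtained
  from such a ball by removing the countably many such balls one level further down. So it
  suffices to compare the two ball formulas at \<open>r = height T0\<close>. With \<open>x = 1/(1 + k)\<close> one has
  \<open>1 - x = k x\<close>, \<open>g\<^sub>c = x (1 - x)\<close> and \<open>p\<^sup>s(n) = k p(n + 1)\<close>, so every summand of the Kesten
  formula equals \<open>k^(r - 1) \<Prod>\<^sub>v x^(offspring v) (1 - x)\<close>, the product ranging over the vertices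
  of height \<open>1, \<dots>, r - 1\<close>. Their offspring numbers add up to \<open>|T0| - 2\<close>, which gives the
  formula for \<open>\<nu>^(\<mu>)\<close>.\<close>

section \<open>Trees\<close>

lemma is_tree_take: "is_tree T \<Longrightarrow> v \<in> T \<Longrightarrow> take n v \<in> T"
  by (simp add: is_tree_def)

lemma is_tree_Nil: "is_tree T \<Longrightarrow> [] \<in> T"
  by (simp add: is_tree_def)

lemma is_tree_zero: "is_tree T \<Longrightarrow> [0] \<in> T"
  by (simp add: is_tree_def)

lemma is_tree_finite_children: "is_tree T \<Longrightarrow> finite {i. v @ [i] \<in> T}"
  unfolding is_tree_def
  by (metis (no_types, lifting) Collect_empty_eq finite.emptyI butlast_snoc butlast_conv_take)

lemma is_tree_sibling: "is_tree T \<Longrightarrow> v @ [i] \<in> T \<Longrightarrow> j < i \<Longrightarrow> v @ [j] \<in> T"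
  unfolding is_tree_def by blast

lemma is_tree_butlast: "is_tree T \<Longrightarrow> v \<in> T \<Longrightarrow> butlast v \<in> T"
  by (simp add: butlast_conv_take is_tree_take)

lemma is_tree_length_one:
  assumes "is_tree T" "v \<in> T" "length v = 1"
  shows "v = [0]"
proof -
  obtain a where v: "v = [a]"
    using assms(3) by (cases v) auto
  have "[1] \<notin> T"
    using assms(1) by (simp add: is_tree_def)
  moreover have "[j] \<in> T" if "j < a" for j
    using is_tree_sibling[OF assms(1), of "[]" a j] assms(2) v that by simp
  ultimately have "\<not> 1 < a" "a \<noteq> 1"
    using assms(2) v by auto
  then have "a = 0" by simp
  with v show ?thesis by simp
qed

lemma is_tree_short_vertices:
  assumes "is_tree T"
  shows "{v \<in> T. length v < 2} = {[], [0]}"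
proof
  show "{v \<in> T. length v < 2} \<subseteq> {[], [0]}"
  proof
    fix v assume v: "v \<in> {v \<in> T. length v < 2}"
    then have "v = [] \<or> length v = 1"
      by (cases v) auto
    then show "v \<in> {[], [0]}"
      using is_tree_length_one[OF assms] v by auto
  qed
  show "{[], [0]} \<subseteq> {v \<in> T. length v < 2}"
    using is_tree_Nil[OF assms] is_tree_zero[OF assms] by auto
qed

lemma Bt_Bt: "h \<le> h' \<Longrightarrow> Bt h (Bt h' T) = Bt h T"
  by (auto simp: Bt_def)

lemma Bt_Suc_subset:
  assumes "is_tree T"
  shows "Bt (Suc n) T \<subseteq> Bt n T \<union> (\<Union>v\<in>Bt n T. (\<lambda>j. v @ [j]) ` {j. v @ [j] \<in> T})"
proof
  fix w assume w: "w \<in> Bt (Suc n) T"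
  show "w \<in> Bt n T \<union> (\<Union>v\<in>Bt n T. (\<lambda>j. v @ [j]) ` {j. v @ [j] \<in> T})"
  proof (cases "length w \<le> n")
    case False
    then have "w \<noteq> []" by auto
    then have "w = butlast w @ [last w]" by simp
    with w False is_tree_butlast[OF assms, of w] show ?thesis
      by (auto simp: Bt_def intro!: bexI[of _ "butlast w"] rev_image_eqI[of "last w"])
  qed (use w in \<open>auto simp: Bt_def\<close>)
qed

lemma finite_Bt:
  assumes "is_tree T"
  shows "finite (Bt n T)"
proof (induction n)
  case 0
  have "Bt 0 T \<subseteq> {[]}" by (auto simp: Bt_def)
  then show ?case by (rule finite_subset) simp
next
  case (Suc n)
  then have "finite (\<Union>v\<in>Bt n T. (\<lambda>j. v @ [j]) ` {j. v @ [j] \<in> T})"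
    using is_tree_finite_children[OF assms] by simp
  then show ?case
    using Bt_Suc_subset[OF assms] Suc.IH by (meson finite_UnI finite_subset)
qed

lemma is_tree_Bt:
  assumes "is_tree T" "1 \<le> n"
  shows "is_tree (Bt n T)"
  using assms is_tree_finite_children[OF assms(1)] unfolding is_tree_def Bt_def
  by (auto intro: finite_subset)

lemma length_le_height: "finite T \<Longrightarrow> v \<in> T \<Longrightarrow> length v \<le> height T"
  by (simp add: height_def)

lemma height_attained: "finite T \<Longrightarrow> T \<noteq> {} \<Longrightarrow> \<exists>v\<in>T. length v = height T"
  unfolding height_def by (metis Max_in finite_imageI image_iff image_is_empty)

lemma height_ge_one: "is_tree T \<Longrightarrow> finite T \<Longrightarrow> 1 \<le> height T"
  using length_le_height[of T "[0]"] is_tree_zero by fastforce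

lemma Bt_eq_self_iff: "Bt h T = T \<longleftrightarrow> (\<forall>w\<in>T. length w \<le> h)"
  by (auto simp: Bt_def)

lemma Bt_height: "finite T \<Longrightarrow> height T \<le> n \<Longrightarrow> Bt n T = T"
  using length_le_height by (fastforce simp: Bt_def)

section \<open>The balls generate the Borel \<sigma>-algebra\<close>

definition exact_balls :: "nat list set set set" where
  "exact_balls = insert {} {ball_tree (height T0) T0 | T0. T0 \<in> fin_trees}"

lemma exact_balls_Pow: "exact_balls \<subseteq> Pow trees"
  by (auto simp: exact_balls_def ball_tree_def)

lemma ball_tree_Int:
  assumes "h \<le> h'"
  shows "ball_tree h T0 \<inter> ball_tree h' T1 = (if Bt h T1 = T0 then ball_tree h' T1 else {})"
proof -
  have "Bt h T = Bt h T1" if "Bt h' T = T1" for T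
    using Bt_Bt[OF assms, of T] that by simp
  then show ?thesis
    unfolding ball_tree_def by auto
qed

lemma Int_stable_exact_balls: "Int_stable exact_balls"
proof (rule Int_stableI)
  have le: "ball_tree (height T0) T0 \<inter> ball_tree (height T1) T1 \<in> exact_balls"
    if "T1 \<in> fin_trees" "height T0 \<le> height T1" for T0 T1
    using ball_tree_Int[OF that(2), of T0 T1] that(1) by (auto simp: exact_balls_def)
  have "ball_tree (height T0) T0 \<inter> ball_tree (height T1) T1 \<in> exact_balls"
    if "T0 \<in> fin_trees" "T1 \<in> fin_trees" for T0 T1
    using le[OF that(2), of T0] le[OF that(1), of T1] by (metis Int_commute nat_le_linear)
  then show "a \<inter> b \<in> exact_balls" if "a \<in> exact_balls" "b \<in> exact_balls" for a b
    using that unfolding exact_balls_def by blast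
qed

lemma trees_in_exact_balls: "trees \<in> exact_balls"
proof -
  let ?T0 = "{[], [0]} :: nat list set"
  have "?T0 \<in> fin_trees" "height ?T0 = 1"
    by (auto simp: fin_trees_def is_tree_def height_def take_Cons' less_Suc_eq_0_disj)
  moreover have "Bt 1 T = {v \<in> T. length v < 2}" for T :: "nat list set"
    by (auto simp: Bt_def)
  then have "ball_tree 1 ?T0 = trees"
    using is_tree_short_vertices by (auto simp: ball_tree_def trees_def)
  ultimately show ?thesis
    unfolding exact_balls_def by (metis (mono_tags, lifting) insertCI mem_Collect_eq)
qed

lemma ball_tree_above_height:
  assumes "T0 \<in> fin_trees" "height T0 < r"
  shows "ball_tree r T0 = {T0}"
proof
  have T0: "is_tree T0" "finite T0"
    using assms(1) by (auto simp: fin_trees_def)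
  then show "{T0} \<subseteq> ball_tree r T0"
    using Bt_height[OF T0(2)] assms(2) by (simp add: ball_tree_def trees_def)
  have "T = T0" if "is_tree T" "Bt r T = T0" for T
  proof -
    have short: "length w \<le> height T0" if "w \<in> T" for w
    proof (rule ccontr)
      assume long: "\<not> length w \<le> height T0"
      then have "take (Suc (height T0)) w \<in> Bt r T"
        using is_tree_take[OF \<open>is_tree T\<close> \<open>w \<in> T\<close>] assms(2) by (auto simp: Bt_def)
      then show False
        using length_le_height[OF T0(2)] \<open>Bt r T = T0\<close> long by fastforce
    qed
    have "\<forall>w\<in>T. length w \<le> r"
      using short assms(2) by force
    then have "Bt r T = T"
      by (simp add: Bt_eq_self_iff)
    with \<open>Bt r T = T0\<close> show ?thesis by simp
  qed
  then show "ball_tree r T0 \<subseteq> {T0}"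
    by (auto simp: ball_tree_def trees_def)
qed

text \<open>A tree whose ball of radius \<open>height T0\<close> is \<open>T0\<close> either is \<open>T0\<close> or has a vertex one level
  deeper, and then its ball of radius \<open>height T0 + 1\<close> is a finite tree of that height.\<close>

lemma singleton_eq_exact_ball_Diff:
  assumes "T0 \<in> fin_trees"
  shows "{T0} = ball_tree (height T0) T0 -
    (\<Union>T1\<in>{T1 \<in> fin_trees. height T1 = Suc (height T0)}. ball_tree (height T1) T1)"
    (is "_ = ?B - ?U")
proof -
  let ?h = "height T0"
  have T0: "is_tree T0" "finite T0"
    using assms by (auto simp: fin_trees_def)
  have "T0 \<in> ?B"
    using Bt_height[OF T0(2)] T0 by (auto simp: ball_tree_def trees_def)
  moreover have "T0 \<notin> ball_tree (height T1) T1" if "T1 \<in> fin_trees" "height T1 = Suc ?h" for T1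
  proof
    assume "T0 \<in> ball_tree (height T1) T1"
    moreover have "finite T1" "T1 \<noteq> {}"
      using that(1) is_tree_Nil by (auto simp: fin_trees_def)
    then obtain v where "v \<in> T1" "length v = height T1"
      using height_attained by blast
    ultimately show False
      using length_le_height[OF T0(2), of v] that(2) by (auto simp: ball_tree_def Bt_def)
  qed
  moreover have "T = T0" if "T \<in> ?B" "T \<notin> ?U" for T
  proof (rule ccontr)
    assume "T \<noteq> T0"
    have T: "is_tree T" "Bt ?h T = T0"
      using that(1) by (auto simp: ball_tree_def trees_def)
    then obtain w where w: "w \<in> T" "?h < length w"
      using \<open>T \<noteq> T0\<close> Bt_eq_self_iff[of ?h T] by (auto simp: not_le)
    let ?T1 = "Bt (Suc ?h) T"
    have T1: "is_tree ?T1" "finite ?T1"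
      using is_tree_Bt[OF T(1)] finite_Bt[OF T(1)] by auto
    have "take (Suc ?h) w \<in> ?T1"
      using is_tree_take[OF T(1) w(1)] w(2) by (auto simp: Bt_def)
    then have "Suc ?h \<le> height ?T1"
      using length_le_height[OF T1(2)] w(2) by fastforce
    moreover have "height ?T1 \<le> Suc ?h"
      using height_attained[OF T1(2)] is_tree_Nil[OF T1(1)] by (force simp: Bt_def)
    ultimately have "height ?T1 = Suc ?h" by simp
    then have "T \<in> ?U"
      using T1 that(1) by (auto simp: fin_trees_def ball_tree_def)
    with that(2) show False by contradiction
  qed
  ultimately show ?thesis by blast
qed

lemma sets_tree_space: "sets tree_space = sigma_sets trees exact_balls"
proof -
  interpret S: sigma_algebra trees "sigma_sets trees exact_balls"
    by (rule sigma_algebra_sigma_sets[OF exact_balls_Pow])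
  have exact: "ball_tree (height T0) T0 \<in> sigma_sets trees exact_balls" if "T0 \<in> fin_trees" for T0
    using that by (auto simp: exact_balls_def)
  have "ball_tree r T0 \<in> sigma_sets trees exact_balls" if T0: "T0 \<in> fin_trees" for r T0
  proof (cases r "height T0" rule: linorder_cases)
    case less
    then have "ball_tree r T0 = {}"
      using T0 height_attained[of T0] is_tree_Nil
      by (fastforce simp: fin_trees_def ball_tree_def Bt_def)
    then show ?thesis by (simp add: sigma_sets.Empty)
  next
    case greater
    have "countable {T1 \<in> fin_trees. height T1 = Suc (height T0)}"
      by (rule countable_subset[OF _ countable_Collect_finite]) (auto simp: fin_trees_def)
    then show ?thesis
      using exact T0 ball_tree_above_height[OF T0 greater] singleton_eq_exact_ball_Diff[OF T0]
      by (metis (no_types, lifting) S.Diff S.countable_UN'' mem_Collect_eq)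
  qed (use exact T0 in simp)
  then have "sigma_sets trees {ball_tree r T0 | r T0. T0 \<in> fin_trees} = sigma_sets trees exact_balls"
    by (intro sigma_sets_eqI; auto simp: exact_balls_def sigma_sets.Empty)
  then show ?thesis
    unfolding tree_space_def by (subst sets_measure_of) (auto simp: ball_tree_def)
qed

lemma prob_space_eqI_Int_stable_generator:
  assumes "prob_space M" "prob_space N" "Int_stable E" "E \<subseteq> Pow \<Omega>" "\<Omega> \<in> E"
    and "sets M = sigma_sets \<Omega> E" "sets N = sigma_sets \<Omega> E"
    and "\<And>X. X \<in> E \<Longrightarrow> measure M X = measure N X"
  shows "M = N"
proof -
  interpret M: prob_space M by fact
  interpret N: prob_space N by fact
  show ?thesis
  proof (rule measure_eqI_generator_eq[where A = "\<lambda>_. \<Omega>", OF assms(3,4) _ assms(6,7)])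
    show "emeasure M X = emeasure N X" if "X \<in> E" for X
      using that assms(8) by (simp add: M.emeasure_eq_measure N.emeasure_eq_measure)
  qed (use assms(5) in \<open>auto simp: M.emeasure_eq_measure\<close>)
qed

section \<open>Counting vertices\<close>

definition inner_vertices :: "nat list set \<Rightarrow> nat list set" where
  "inner_vertices T = {v \<in> T. 1 \<le> length v \<and> length v < height T}"

lemma UN_D_eq_inner_vertices: "(\<Union>s\<in>{1..height T - 1}. D s T) = inner_vertices T"
  by (auto simp: D_def inner_vertices_def)

lemma card_inner_vertices:
  assumes "is_tree T" "finite T"
  shows "card T = card (inner_vertices T) + card (D (height T) T) + 1"
proof -
  let ?J = "{v \<in> T. 1 \<le> length v}"
  have "T = insert [] ?J" "[] \<notin> ?J"
    using is_tree_Nil[OF assms(1)] by (auto simp: Suc_le_eq)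
  then have "card T = card ?J + 1"
    using assms(2) by (metis card_insert_disjoint finite_insert Suc_eq_plus1)
  moreover have "?J = inner_vertices T \<union> D (height T) T" "inner_vertices T \<inter> D (height T) T = {}"
    using length_le_height[OF assms(2)] height_ge_one[OF assms]
    by (force simp: inner_vertices_def D_def)+
  ultimately show ?thesis
    using assms(2) by (simp add: card_Un_disjoint inner_vertices_def D_def)
qed

lemma card_D_height_pos: "is_tree T \<Longrightarrow> finite T \<Longrightarrow> 0 < card (D (height T) T)"
  using height_attained[of T] is_tree_Nil by (fastforce simp: D_def card_gt_0_iff)

text \<open>Every vertex of height at least 2 is the child of exactly one inner vertex.\<close>

lemma sum_offspring_inner_vertices:
  assumes "is_tree T" "finite T"
  shows "sum (offspring T) (inner_vertices T) = card T - 2"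
proof -
  let ?children = "\<lambda>v. (\<lambda>j. v @ [j]) ` {j. v @ [j] \<in> T}"
  have "{w \<in> T. 2 \<le> length w} = (\<Union>v\<in>inner_vertices T. ?children v)"
  proof (intro equalityI subsetI)
    fix w assume w: "w \<in> {w \<in> T. 2 \<le> length w}"
    then have "w \<noteq> []" by auto
    with w have "w = butlast w @ [last w]" "butlast w \<in> inner_vertices T"
      using is_tree_butlast[OF assms(1)] length_le_height[OF assms(2), of w]
      by (auto simp: inner_vertices_def)
    then show "w \<in> (\<Union>v\<in>inner_vertices T. ?children v)"
      using w by (auto intro!: bexI[of _ "butlast w"] rev_image_eqI[of "last w"])
  qed (auto simp: inner_vertices_def)
  moreover have "card (\<Union>v\<in>inner_vertices T. ?children v) = (\<Sum>v\<in>inner_vertices T. card (?children v))"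
    by (rule card_UN_disjoint)
      (use assms(2) is_tree_finite_children[OF assms(1)] in \<open>auto simp: inner_vertices_def\<close>)
  ultimately have "card {w \<in> T. 2 \<le> length w} = (\<Sum>v\<in>inner_vertices T. card (?children v))"
    by simp
  also have "\<dots> = sum (offspring T) (inner_vertices T)"
    by (simp add: offspring_def card_image inj_on_def)
  finally have "card {w \<in> T. 2 \<le> length w} = sum (offspring T) (inner_vertices T)" .
  moreover have "card T = card {w \<in> T. length w < 2} + card {w \<in> T. 2 \<le> length w}"
  proof -
    have "card ({w \<in> T. length w < 2} \<union> {w \<in> T. 2 \<le> length w})
        = card {w \<in> T. length w < 2} + card {w \<in> T. 2 \<le> length w}"
      by (rule card_Un_disjoint) (use assms(2) in auto)
    moreover have "{w \<in> T. length w < 2} \<union> {w \<in> T. 2 \<le> length w} = T" by auto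
    ultimately show ?thesis by simp
  qed
  ultimately show ?thesis
    using is_tree_short_vertices[OF assms(1)] by simp
qed

lemma path_V_Diff_eq: "path_V i - {i} = (\<lambda>n. take n i) ` {1..<length i}"
proof
  show "path_V i - {i} \<subseteq> (\<lambda>n. take n i) ` {1..<length i}"
  proof
    fix v assume "v \<in> path_V i - {i}"
    then obtain n where "v = take n i" "1 \<le> n" "n \<le> length i" "v \<noteq> i"
      unfolding path_V_def by blast
    then show "v \<in> (\<lambda>n. take n i) ` {1..<length i}"
      by (metis atLeastLessThan_iff image_eqI le_neq_implies_less take_all)
  qed
  show "(\<lambda>n. take n i) ` {1..<length i} \<subseteq> path_V i - {i}"
    unfolding path_V_def by (force dest: arg_cong[where f = length])
qed

lemma path_V_Diff_subset_inner_vertices: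
  "is_tree T \<Longrightarrow> finite T \<Longrightarrow> i \<in> D (height T) T \<Longrightarrow> path_V i - {i} \<subseteq> inner_vertices T"
  by (auto simp: path_V_Diff_eq inner_vertices_def D_def is_tree_take)

lemma card_path_V_Diff: "card (path_V i - {i}) = length i - 1"
proof -
  have "inj_on (\<lambda>n. take n i) {1..<length i}"
  proof (rule inj_onI)
    fix m n assume "m \<in> {1..<length i}" "n \<in> {1..<length i}" "take m i = take n i"
    then have "length (take m i) = length (take n i)" "m < length i" "n < length i"
      by auto
    then show "m = n" by simp
  qed
  then show ?thesis
    by (simp add: path_V_Diff_eq card_image)
qed

lemma offspring_path_V_pos:
  assumes "is_tree T" "i \<in> T" "v \<in> path_V i - {i}"
  shows "0 < offspring T v"
proof -
  obtain n where n: "v = take n i" "n < length i"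
    using assms(3) by (auto simp: path_V_Diff_eq)
  then have "v @ [i ! n] \<in> T"
    using is_tree_take[OF assms(1,2), of "Suc n"] by (simp add: take_Suc_conv_app_nth)
  then show ?thesis
    using is_tree_finite_children[OF assms(1), of v] by (auto simp: offspring_def card_gt_0_iff)
qed

section \<open>The two ball formulas agree\<close>

lemma
  assumes "\<mu> < 0"
  shows kpar_gt_one: "1 < kpar \<mu>"
    and xpar_eq: "xpar \<mu> = 1 / (1 + kpar \<mu>)"
proof -
  let ?k = "kpar \<mu>"
  show k: "1 < ?k"
    using assms by (simp add: kpar_def)
  have "1 - 4 * gcrit \<mu> = ((1 + ?k)\<^sup>2 - 4 * ?k) / (1 + ?k)\<^sup>2"
    using k by (simp add: gcrit_def field_simps)
  also have "\<dots> = ((?k - 1) / (?k + 1))\<^sup>2"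
    by (simp add: power_divide power2_eq_square algebra_simps)
  finally have "1 - 4 * gcrit \<mu> = ((?k - 1) / (?k + 1))\<^sup>2" .
  then have "sqrt (1 - 4 * gcrit \<mu>) = (?k - 1) / (?k + 1)"
    using k by simp
  then show "xpar \<mu> = 1 / (1 + ?k)"
    using k unfolding xpar_def Xfun_def by (simp add: field_simps)
qed

lemma
  assumes "\<mu> < 0"
  shows gcrit_eq: "gcrit \<mu> = xpar \<mu> * (1 - xpar \<mu>)"
    and psdist_eq: "psdist \<mu> n = kpar \<mu> * pdist \<mu> (Suc n)"
proof -
  have k: "1 < kpar \<mu>" and x: "xpar \<mu> = 1 / (1 + kpar \<mu>)"
    using kpar_gt_one[OF assms] xpar_eq[OF assms] .
  show "gcrit \<mu> = xpar \<mu> * (1 - xpar \<mu>)"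
    using k unfolding x gcrit_def by (simp add: field_simps power2_eq_square)
  have "1 - xpar \<mu> = kpar \<mu> * xpar \<mu>"
    using k unfolding x by (simp add: field_simps)
  then have "mpar \<mu> = 1 / kpar \<mu>"
    using k x by (simp add: mpar_def)
  then show "psdist \<mu> n = kpar \<mu> * pdist \<mu> (Suc n)"
    by (simp add: psdist_def)
qed

text \<open>On the spine \<open>p\<^sup>s(\<sigma> v - 2) = k p(\<sigma> v - 1)\<close>, so the spine contributes the factor \<open>k^(r - 1)\<close>
  and the summand no longer depends on \<open>i\<close>.\<close>

lemma kesten_summand_eq:
  assumes "\<mu> < 0" "is_tree T" "finite T" "i \<in> D (height T) T"
  shows "(\<Prod>v\<in>inner_vertices T - path_V i. pdist \<mu> (deg T v - 1))
       * (\<Prod>v\<in>path_V i - {i}. psdist \<mu> (deg T v - 2))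
       = kpar \<mu> ^ (height T - 1) * (\<Prod>v\<in>inner_vertices T. pdist \<mu> (offspring T v))"
proof -
  let ?P = "path_V i - {i}"
  have i: "i \<in> T" "length i = height T"
    using assms(4) by (auto simp: D_def)
  have "inner_vertices T - path_V i = inner_vertices T - ?P"
    using i by (auto simp: inner_vertices_def)
  moreover have "psdist \<mu> (deg T v - 2) = kpar \<mu> * pdist \<mu> (offspring T v)" if "v \<in> ?P" for v
    using offspring_path_V_pos[OF assms(2) i(1) that] psdist_eq[OF assms(1)]
    by (simp add: deg_def Suc_diff_Suc)
  ultimately have "(\<Prod>v\<in>inner_vertices T - path_V i. pdist \<mu> (deg T v - 1))
       * (\<Prod>v\<in>?P. psdist \<mu> (deg T v - 2))
     = (\<Prod>v\<in>inner_vertices T - ?P. pdist \<mu> (offspring T v))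
       * (kpar \<mu> ^ card ?P * (\<Prod>v\<in>?P. pdist \<mu> (offspring T v)))"
    by (simp add: deg_def prod.distrib)
  also have "\<dots> = kpar \<mu> ^ (height T - 1) * (\<Prod>v\<in>inner_vertices T. pdist \<mu> (offspring T v))"
    using prod.subset_diff[OF path_V_Diff_subset_inner_vertices[OF assms(2-4)], of "\<lambda>v. pdist \<mu> (offspring T v)"]
      assms(3) card_path_V_Diff i(2)
    by (simp add: inner_vertices_def)
  finally show ?thesis .
qed

lemma nu_ball_eq_kesten_ball:
  assumes "\<mu> < 0" "T0 \<in> fin_trees"
  shows "nu_ball \<mu> (height T0) T0 = kesten_ball \<mu> (height T0) T0"
proof -
  have T0: "is_tree T0" "finite T0"
    using assms(2) by (auto simp: fin_trees_def)
  define x where "x = xpar \<mu>"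
  define k where "k = kpar \<mu>"
  define r where "r = height T0"
  define K where "K = card (D r T0)"
  define c where "c = card (inner_vertices T0)"
  have sizes: "tsize T0 - K = c" "card T0 - 2 = c + (K - 1)"
    using card_inner_vertices[OF T0] card_D_height_pos[OF T0] by (auto simp: tsize_def c_def K_def r_def)
  have "(\<Prod>v\<in>inner_vertices T0. pdist \<mu> (offspring T0 v))
      = (\<Prod>v\<in>inner_vertices T0. x ^ offspring T0 v) * (1 - x) ^ c"
    by (simp add: pdist_def prod.distrib c_def x_def)
  also have "\<dots> = x ^ (card T0 - 2) * (1 - x) ^ c"
    using sum_offspring_inner_vertices[OF T0] by (simp add: power_sum[symmetric])
  finally have "(\<Prod>v\<in>inner_vertices T0. pdist \<mu> (offspring T0 v)) = x ^ (card T0 - 2) * (1 - x) ^ c" .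
  then have "kesten_ball \<mu> r T0 = K * (k ^ (r - 1) * (x ^ (card T0 - 2) * (1 - x) ^ c))"
    using kesten_summand_eq[OF assms(1) T0] UN_D_eq_inner_vertices[of T0]
    by (simp add: kesten_ball_def K_def k_def r_def)
  also have "\<dots> = nu_ball \<mu> r T0"
    unfolding nu_ball_def Let_def sizes(1)[unfolded K_def] gcrit_eq[OF assms(1)] sizes(2)
    by (simp add: x_def k_def K_def power_add power_mult_distrib)
  finally show ?thesis
    by (simp add: r_def)
qed

theorem mainTheorem8:
  fixes \<mu> :: real and \<nu> lam :: "nat list set measure"
  assumes "\<mu> < 0"
    and "prob_space \<nu>" and "sets \<nu> = sets tree_space"
    and "\<And>T0 r. T0 \<in> fin_trees \<Longrightarrow> height T0 = r \<Longrightarrow>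
           measure \<nu> (ball_tree r T0) = nu_ball \<mu> r T0"
    and "prob_space lam" and "sets lam = sets tree_space"
    and "\<And>T0 r. T0 \<in> fin_trees \<Longrightarrow> height T0 = r \<Longrightarrow>
           measure lam (ball_tree r T0) = kesten_ball \<mu> r T0"
  shows "\<nu> = lam"
proof (rule prob_space_eqI_Int_stable_generator
    [OF assms(2,5) Int_stable_exact_balls exact_balls_Pow trees_in_exact_balls])
  show "sets \<nu> = sigma_sets trees exact_balls" "sets lam = sigma_sets trees exact_balls"
    using assms(3,6) sets_tree_space by simp_all
  show "measure \<nu> X = measure lam X" if "X \<in> exact_balls" for X
    using that assms(4,7) nu_ball_eq_kesten_ball[OF assms(1)] by (auto simp: exact_balls_def)
qed

end
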